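(* Let $C$ be a copula and define $C^*(u,v)=u-C(u,1-v)$ and $C^{**}(u,v)=v-C(1-u,v)$ for $u,v\in[0,1]$. Then for all $p,q\in[0,1]$, $$\lambda^{C^*}(q|p)=\lambda^C(1-q|p),\qquad \lambda^{C^{**}}(q|p)=\lambda^C(q|1-p),$$ in the sense that in each identity one side exists if and only if the other does, and then they are equal.
   Context: If $(U,V)$ has copula $C$, then $C^*$ and $C^{**}$ are the copulas of $(U,1-V)$ and $(1-U,V)$. For a copula $C$ (bivariate distribution function on $[0,1]^2$ with uniform margins) and $p,q\in[0,1]$, the $(p,q)$-quantile dependence coefficient is $\lambda^C(q|p)=\lim_{t\to0^+}\frac{V_C([(p-t)^+,(p+t)^-]\times[(q-t)^+,(q+t)^-])}{(p+t)^- - (p-t)^+}$ when the limit exists, where $a^+=\max(a,0)$, $a^-=1-(1-a)^+$, and $V_C([u_1,u_2]\times[v_1,v_2])=C(u_2,v_2)-C(u_2,v_1)-C(u_1,v_2)+C(u_1,v_1)$. *)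

theory Defs
  imports "HOL-Analysis.Analysis"
begin

definition is_copula :: "(real \<Rightarrow> real \<Rightarrow> real) \<Rightarrow> bool" where
  "is_copula C \<longleftrightarrow>
     (\<forall>u\<in>{0..1}. C u 0 = 0 \<and> C 0 u = 0 \<and> C u 1 = u \<and> C 1 u = u) \<and>
     (\<forall>u1 u2 v1 v2. 0 \<le> u1 \<and> u1 \<le> u2 \<and> u2 \<le> 1 \<and> 0 \<le> v1 \<and> v1 \<le> v2 \<and> v2 \<le> 1 \<longrightarrow>
        C u2 v2 - C u2 v1 - C u1 v2 + C u1 v1 \<ge> 0)"

definition C_vol :: "(real \<Rightarrow> real \<Rightarrow> real) \<Rightarrow> real \<Rightarrow> real \<Rightarrow> real \<Rightarrow> real \<Rightarrow> real" where
  "C_vol C u1 u2 v1 v2 = C u2 v2 - C u2 v1 - C u1 v2 + C u1 v1"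

definition pos_part :: "real \<Rightarrow> real" where
  "pos_part a = max a 0"

definition neg_part :: "real \<Rightarrow> real" where
  "neg_part a = 1 - pos_part (1 - a)"

definition qd_ratio :: "(real \<Rightarrow> real \<Rightarrow> real) \<Rightarrow> real \<Rightarrow> real \<Rightarrow> real \<Rightarrow> real" where
  "qd_ratio C q p t =
     C_vol C (pos_part (p - t)) (neg_part (p + t)) (pos_part (q - t)) (neg_part (q + t))
     / (neg_part (p + t) - pos_part (p - t))"

definition has_qdc :: "(real \<Rightarrow> real \<Rightarrow> real) \<Rightarrow> real \<Rightarrow> real \<Rightarrow> real \<Rightarrow> bool" where
  "has_qdc C q p L \<longleftrightarrow> ((qd_ratio C q p) \<longlongrightarrow> L) (at_right 0)"

definition copula_star :: "(real \<Rightarrow> real \<Rightarrow> real) \<Rightarrow> real \<Rightarrow> real \<Rightarrow> real" where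
  "copula_star C u v = u - C u (1 - v)"

definition copula_dstar :: "(real \<Rightarrow> real \<Rightarrow> real) \<Rightarrow> real \<Rightarrow> real \<Rightarrow> real" where
  "copula_dstar C u v = v - C (1 - u) v"

end

theory Submission
  imports Defs
begin

(* The reflection v \<mapsto> 1 - v maps the window [(q-t)^+, (q+t)^-] onto
   [(1-q-t)^+, (1-q+t)^-] and turns C-volumes into volumes of copula_star C; likewise
   u \<mapsto> 1 - u for copula_dstar C. So the difference quotients defining the coefficients
   agree for every t, and neither the copula axioms nor the range of p and q are needed. *)

lemma one_minus_neg_part: "1 - neg_part a = pos_part (1 - a)"
  by (simp add: neg_part_def)

lemma one_minus_pos_part: "1 - pos_part a = neg_part (1 - a)"
  by (simp add: neg_part_def)

lemma C_vol_copula_star: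
  "C_vol (copula_star C) u1 u2 v1 v2 = C_vol C u1 u2 (1 - v2) (1 - v1)"
  by (simp add: C_vol_def copula_star_def)

lemma C_vol_copula_dstar:
  "C_vol (copula_dstar C) u1 u2 v1 v2 = C_vol C (1 - u2) (1 - u1) v1 v2"
  by (simp add: C_vol_def copula_dstar_def)

lemma qd_ratio_copula_star: "qd_ratio (copula_star C) q p = qd_ratio C (1 - q) p"
proof
  fix t
  have lower: "1 - neg_part (q + t) = pos_part (1 - q - t)"
    and upper: "1 - pos_part (q - t) = neg_part (1 - q + t)"
    by (simp_all add: one_minus_neg_part one_minus_pos_part algebra_simps)
  show "qd_ratio (copula_star C) q p t = qd_ratio C (1 - q) p t"
    unfolding qd_ratio_def C_vol_copula_star lower upper ..
qed

lemma qd_ratio_copula_dstar: "qd_ratio (copula_dstar C) q p = qd_ratio C q (1 - p)"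
proof
  fix t
  have lower: "1 - neg_part (p + t) = pos_part (1 - p - t)"
    and upper: "1 - pos_part (p - t) = neg_part (1 - p + t)"
    by (simp_all add: one_minus_neg_part one_minus_pos_part algebra_simps)
  have width: "neg_part (p + t) - pos_part (p - t) = neg_part (1 - p + t) - pos_part (1 - p - t)"
    by (simp flip: lower upper)
  show "qd_ratio (copula_dstar C) q p t = qd_ratio C q (1 - p) t"
    unfolding qd_ratio_def C_vol_copula_dstar lower upper width ..
qed

theorem proposition6:
  fixes C :: "real \<Rightarrow> real \<Rightarrow> real" and p q :: real
  assumes "is_copula C" and "p \<in> {0..1}" and "q \<in> {0..1}"
  shows "(\<forall>L. has_qdc (copula_star C) q p L \<longleftrightarrow> has_qdc C (1 - q) p L) \<and>
         (\<forall>L. has_qdc (copula_dstar C) q p L \<longleftrightarrow> has_qdc C q (1 - p) L)"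
  by (simp add: has_qdc_def qd_ratio_copula_star qd_ratio_copula_dstar)

end
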